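(* Let $M_G$ be a mixed graph of order $n$ such that $N(M_G)$ has rank $2$. Then $M_G$ is switching equivalent to the (undirected) graph $K_{a,b}\cup tK_1$ for some integers $a,b\ge1$, $t\ge0$.
   Context: A mixed graph $M_G$ is obtained from a finite simple graph $G$ by orienting the edges of some subset of $E(G)$. With $\omega=\frac{1+\mathbf{i}\sqrt3}{2}$, $N(M_G)$ has $(u,v)$-entry $\omega$ if $\overrightarrow{uv}$ is an arc, $\bar\omega$ if $\overrightarrow{vu}$ is an arc, $1$ for an undirected edge, $0$ otherwise. $\mathbb{T}_6=\{1,-1,\omega,\bar\omega,-\omega,-\bar\omega\}$. Given a partition $V(M_G)=\bigcup_{j\in\mathbb{T}_6}V_j$ into six possibly empty sets, an edge or arc $xy$ has type $(j,k)$ if $x\in V_j,y\in V_k$ (arcs directed from $x$ to $y$). The partition is admissible if every undirected edge has type $(j,j)$ or $(j,\omega j)$, and every arc has type $(j,j)$, $(j,\bar\omega j)$ or $(j,-\omega j)$, for some $j$. A three-way switching w.r.t. an admissible partition replaces each undirected edge of type $(j,\omega j)$ by an arc from $V_j$ to $V_{\omega j}$, replaces each arc of type $(j,\bar\omega j)$ by an undirected edge, and reverses each arc of type $(j,-\omega j)$. The converse of a mixed graph reverses all arcs. Two mixed graphs are switching equivalent if one is obtained from the other by a sequence of three-way switchings and taking converses. $K_{a,b}\cup tK_1$ is the complete bipartite graph $K_{a,b}$ together with $t$ isolated vertices. *)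

theory Defs
  imports "HOL-Analysis.Analysis"
begin

text \<open>A mixed graph on the finite vertex type 'v: a pair (U, A) where U is the
 (symmetric, irreflexive) relation of undirected edges and A u v means there is an
 arc from u to v.\<close>

type_synonym 'v mgraph = "('v \<Rightarrow> 'v \<Rightarrow> bool) \<times> ('v \<Rightarrow> 'v \<Rightarrow> bool)"

definition mixed_graph :: "'v mgraph \<Rightarrow> bool" where
  "mixed_graph G \<longleftrightarrow>
     (\<forall>u v. fst G u v \<longrightarrow> fst G v u) \<and> (\<forall>u. \<not> fst G u u) \<and> (\<forall>u. \<not> snd G u u) \<and>
     (\<forall>u v. snd G u v \<longrightarrow> \<not> snd G v u \<and> \<not> fst G u v)"

definition omega :: complex where
  "omega = Complex (1/2) (sqrt 3 / 2)"

definition T6 :: "complex set" where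
  "T6 = {1, -1, omega, cnj omega, -omega, -cnj omega}"

definition Nmat :: "('v::finite) mgraph \<Rightarrow> complex^'v^'v" where
  "Nmat G = (\<chi> u v. if snd G u v then omega else if snd G v u then cnj omega
                      else if fst G u v then 1 else 0)"

text \<open>A partition of the vertices into the six sets V_j (j in T6) is given by the
 map p with p x = j iff x in V_j.\<close>

definition admissible :: "('v \<Rightarrow> complex) \<Rightarrow> 'v mgraph \<Rightarrow> bool" where
  "admissible p G \<longleftrightarrow> (\<forall>x. p x \<in> T6) \<and>
     (\<forall>x y. fst G x y \<longrightarrow> p x = p y \<or> p y = omega * p x \<or> p x = omega * p y) \<and>
     (\<forall>x y. snd G x y \<longrightarrow> p y = p x \<or> p y = cnj omega * p x \<or> p y = - omega * p x)"

definition three_way_switch :: "('v \<Rightarrow> complex) \<Rightarrow> 'v mgraph \<Rightarrow> 'v mgraph" where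
  "three_way_switch p G =
    ((\<lambda>x y. (fst G x y \<and> \<not> (p y = omega * p x) \<and> \<not> (p x = omega * p y))
          \<or> (snd G x y \<and> p y = cnj omega * p x)
          \<or> (snd G y x \<and> p x = cnj omega * p y)),
     (\<lambda>x y. (snd G x y \<and> p y = p x)
          \<or> (fst G x y \<and> p y = omega * p x)
          \<or> (snd G y x \<and> p x = - omega * p y)))"

definition mconverse :: "'v mgraph \<Rightarrow> 'v mgraph" where
  "mconverse G = (fst G, \<lambda>x y. snd G y x)"

definition switch_step :: "'v mgraph \<Rightarrow> 'v mgraph \<Rightarrow> bool" where
  "switch_step G H \<longleftrightarrow> (\<exists>p. admissible p G \<and> H = three_way_switch p G) \<or> H = mconverse G"

definition switching_equivalent :: "'v mgraph \<Rightarrow> 'v mgraph \<Rightarrow> bool" where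
  "switching_equivalent G H \<longleftrightarrow> switch_step\<^sup>*\<^sup>* G H \<or> switch_step\<^sup>*\<^sup>* H G"

text \<open>The undirected graph K_{|X|,|Y|} together with isolated vertices UNIV - X - Y.\<close>
definition Kbip_iso :: "'v set \<Rightarrow> 'v set \<Rightarrow> 'v mgraph" where
  "Kbip_iso X Y = ((\<lambda>x y. (x \<in> X \<and> y \<in> Y) \<or> (x \<in> Y \<and> y \<in> X)), (\<lambda>x y. False))"

end

theory Submission
  imports Defs
begin

(* The Hermitian matrix N of a mixed graph has zero diagonal and every entry is 0 or lies
   in T6. If N has rank 2, pick a nonzero entry N(u,v): rows u and v span the row space,
   and comparing columns u and v gives
     N(r,w) = N(r,v) N(v,u) N(u,w) + N(r,u) N(u,v) N(v,w).
   On the diagonal this says z + cnj z = 0 for z = N(r,u) N(u,v) N(v,r), and no sixth root of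
   unity is purely imaginary, so the neighbourhoods A of u and B of v are disjoint. Hence N is
   supported exactly on A x B and B x A, where it factors as N(x,y) = p x * cnj (p y) with
   p x in T6. Switching with respect to the partition by the values of p makes every edge and
   arc undirected, which leaves K_{A,B} plus isolated vertices. *)

lemma omega_times_cnj_omega: "omega * cnj omega = 1"
  and omega_squared: "omega * omega = - cnj omega"
  and cnj_omega_squared: "cnj omega * cnj omega = - omega"
  by (simp_all add: omega_def complex_eq_iff)

lemma omega_nonzero: "omega \<noteq> 0" and omega_neq_1: "omega \<noteq> 1"
  and cnj_omega_neq_1: "cnj omega \<noteq> 1" and cnj_omega_neq_minus_omega: "cnj omega \<noteq> - omega"
  by (simp_all add: omega_def complex_eq_iff)

lemma one_T6: "1 \<in> T6"
  by (simp add: T6_def)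

lemma T6_mult_closed: "a \<in> T6 \<Longrightarrow> b \<in> T6 \<Longrightarrow> a * b \<in> T6"
  unfolding T6_def
  by (auto simp: omega_times_cnj_omega omega_squared cnj_omega_squared
      mult.commute[of "cnj omega" omega])

lemma T6_times_cnj: "z \<in> T6 \<Longrightarrow> z * cnj z = 1"
  using omega_times_cnj_omega by (auto simp: T6_def mult.commute)

lemma T6_Re_nonzero: "z \<in> T6 \<Longrightarrow> Re z \<noteq> 0"
  by (auto simp: T6_def omega_def)

lemma rank_nonzero_obtains_entry:
  fixes N :: "'a::field^'n^'m"
  assumes "rank N \<noteq> 0"
  obtains i j where "N$i$j \<noteq> 0"
proof (rule ccontr)
  assume "\<not> thesis"
  with that have "N$i$j = 0" for i j
    by blast
  then have "rows N \<subseteq> {0}"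
    by (auto simp: rows_def row_def vec_eq_iff)
  with assms show False
    by (simp add: row_rank_def_gen)
qed

lemma rank_2_row_expansion:
  fixes N :: "'a::field^'n^'n"
  assumes rank: "rank N = 2" and "N$u$u = 0" "N$v$v = 0" and uv: "N$u$v * N$v$u = 1"
  shows "N$r$w = N$r$v * N$v$u * N$u$w + N$r$u * N$u$v * N$v$w"
proof -
  have "N$u \<notin> vec.span {N$v}"
    using assms by (auto simp: vec.span_singleton)
  moreover have "vec.independent {N$v}"
    using uv vec.independent_insertI[of "N$v" "{}"] by auto
  ultimately have indep: "vec.independent {N$u, N$v}"
    by (rule vec.independent_insertI)
  have "N$u \<noteq> N$v"
    using assms by force
  then have "card {N$u, N$v} = vec.dim (rows N)"
    using rank by (auto simp: row_rank_def_gen)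
  then have "rows N \<subseteq> vec.span {N$u, N$v}"
    using vec.card_eq_dim[of "{N$u, N$v}" "rows N"] indep by (auto simp: rows_def row_def)
  moreover have "N$r \<in> rows N"
    by (auto simp: rows_def row_def)
  ultimately obtain \<alpha> \<beta> where row: "N$r = \<alpha> *s N$u + \<beta> *s N$v"
    by (auto simp: vec.span_insert vec.span_singleton algebra_simps)
  have "N$r$v * N$v$u = \<alpha>" "N$r$u * N$u$v = \<beta>"
    using arg_cong[OF row, of "\<lambda>x. x$v"] arg_cong[OF row, of "\<lambda>x. x$u"] assms
    by (simp_all add: mult.assoc mult.commute[of "N$v$u"])
  with row show ?thesis
    by simp
qed

locale T6_hermitian =
  fixes N :: "complex^'v::finite^'v"
  assumes hermitian: "N$y$x = cnj (N$x$y)"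
    and zero_diagonal: "N$x$x = 0"
    and entry_T6: "N$x$y \<noteq> 0 \<Longrightarrow> N$x$y \<in> T6"
begin

lemma entry_times_transpose: "N$x$y \<noteq> 0 \<Longrightarrow> N$x$y * N$y$x = 1"
  using entry_T6 T6_times_cnj hermitian by metis

lemma entry_nonzero_sym: "N$y$x \<noteq> 0 \<longleftrightarrow> N$x$y \<noteq> 0"
  by (metis hermitian complex_cnj_zero_iff)

context
  fixes u v
  assumes rank: "rank N = 2" and pivot: "N$u$v \<noteq> 0"
begin

lemma row_expansion: "N$r$w = N$r$v * N$v$u * N$u$w + N$r$u * N$u$v * N$v$w"
  using rank_2_row_expansion[OF rank] zero_diagonal entry_times_transpose[OF pivot] by blast

lemma pivot_neighbourhoods_disjoint: "N$r$u = 0 \<or> N$r$v = 0"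
proof (rule ccontr)
  assume "\<not> ?thesis"
  then have "N$r$u \<noteq> 0" "N$v$r \<noteq> 0"
    using entry_nonzero_sym by auto
  define z where "z = N$r$u * N$u$v * N$v$r"
  have "z \<in> T6"
    using \<open>N$r$u \<noteq> 0\<close> pivot \<open>N$v$r \<noteq> 0\<close> unfolding z_def by (metis entry_T6 T6_mult_closed)
  moreover have "N$r$v * N$v$u * N$u$r = cnj z"
    unfolding z_def complex_cnj_mult hermitian[of u r] hermitian[of r v] hermitian[of v u]
    by (simp add: mult_ac)
  then have "cnj z + z = 0"
    using row_expansion[of r r] zero_diagonal[of r] by (simp add: z_def)
  then have "Re z = 0"
    by (simp add: complex_eq_iff)
  ultimately show False
    using T6_Re_nonzero by blast
qed

lemma entry_through_pivot: "N$r$u \<noteq> 0 \<Longrightarrow> N$r$w = N$r$u * N$u$v * N$v$w"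
  using row_expansion[of r w] pivot_neighbourhoods_disjoint[of r] by simp

lemma entry_outside_pivot_neighbourhoods: "N$r$u = 0 \<Longrightarrow> N$r$v = 0 \<Longrightarrow> N$r$w = 0"
  using row_expansion[of r w] by simp

end

lemma rank_2_bipartite_phases:
  assumes rank: "rank N = 2"
  obtains A B p where "A \<inter> B = {}" "A \<noteq> {}" "B \<noteq> {}" "\<And>x. p x \<in> T6"
    and "\<And>x y. N$x$y \<noteq> 0 \<longleftrightarrow> (x \<in> A \<and> y \<in> B) \<or> (x \<in> B \<and> y \<in> A)"
    and "\<And>x y. N$x$y \<noteq> 0 \<Longrightarrow> N$x$y = p x * cnj (p y)"
proof -
  obtain u v where uv: "N$u$v \<noteq> 0"
    using rank rank_nonzero_obtains_entry by (metis zero_neq_numeral)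
  then have vu: "N$v$u \<noteq> 0"
    using entry_nonzero_sym by blast
  define A where "A = {r. N$r$u \<noteq> 0}"
  define B where "B = {r. N$r$v \<noteq> 0}"
  define p where "p r = (if r \<in> A then N$r$u * N$u$v else if r \<in> B then N$r$v else 1)" for r
  have disjoint: "A \<inter> B = {}"
    using pivot_neighbourhoods_disjoint[OF rank uv] by (auto simp: A_def B_def)
  have "v \<in> A" "u \<in> B"
    using uv vu by (simp_all add: A_def B_def)
  have p_T6: "p x \<in> T6" for x
    using uv one_T6 by (auto simp: p_def A_def B_def intro: entry_T6 T6_mult_closed)
  have support: "N$x$y \<noteq> 0 \<longleftrightarrow> (x \<in> A \<and> y \<in> B) \<or> (x \<in> B \<and> y \<in> A)" for x y
  proof -
    consider "x \<in> A" | "x \<in> B" | "x \<notin> A" "x \<notin> B"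
      by blast
    then show ?thesis
    proof cases
      case 1
      then show ?thesis
        using disjoint uv entry_through_pivot[OF rank uv, of x y] entry_nonzero_sym[of v y]
        by (auto simp: A_def B_def)
    next
      case 2
      then show ?thesis
        using disjoint vu entry_through_pivot[OF rank vu, of x y] entry_nonzero_sym[of u y]
        by (auto simp: A_def B_def)
    next
      case 3
      then show ?thesis
        using entry_outside_pivot_neighbourhoods[OF rank uv, of x y] by (auto simp: A_def B_def)
    qed
  qed
  have phase_AB: "N$x$y = p x * cnj (p y)" if "x \<in> A" "y \<in> B" for x y
    using that disjoint entry_through_pivot[OF rank uv, of x y] hermitian[of y v]
    by (auto simp: p_def A_def)
  have phase: "N$x$y = p x * cnj (p y)" if "N$x$y \<noteq> 0" for x y
  proof -
    from that support consider "x \<in> A" "y \<in> B" | "y \<in> A" "x \<in> B"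
      by blast
    then show ?thesis
    proof cases
      case 1
      then show ?thesis
        by (rule phase_AB)
    next
      case 2
      then have "N$x$y = cnj (p y * cnj (p x))"
        using phase_AB hermitian by metis
      then show ?thesis
        by (simp add: mult.commute)
    qed
  qed
  show thesis
    using that disjoint \<open>v \<in> A\<close> \<open>u \<in> B\<close> p_T6 support phase by blast
qed

end

lemma Nmat_nonzero_iff: "Nmat G$x$y \<noteq> 0 \<longleftrightarrow> fst G x y \<or> snd G x y \<or> snd G y x"
  by (simp add: Nmat_def omega_def complex_eq_iff)

lemma Nmat_arc: "snd G x y \<Longrightarrow> Nmat G$x$y = omega"
  by (simp add: Nmat_def)

lemma Nmat_edge:
  assumes "mixed_graph G" and "fst G x y"
  shows "Nmat G$x$y = 1"
proof -
  have "\<not> snd G x y" "\<not> snd G y x"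
    using assms unfolding mixed_graph_def by blast+
  with assms(2) show ?thesis
    by (simp add: Nmat_def)
qed

lemma T6_hermitian_Nmat: "mixed_graph G \<Longrightarrow> T6_hermitian (Nmat G)"
  by unfold_locales (auto simp: Nmat_def mixed_graph_def T6_def)

lemma switch_step_to_support:
  fixes G :: "('v::finite) mgraph"
  assumes G: "mixed_graph G" and T6: "\<And>x. p x \<in> T6"
    and phase: "\<And>x y. Nmat G$x$y \<noteq> 0 \<Longrightarrow> Nmat G$x$y = p x * cnj (p y)"
  shows "switch_step G (\<lambda>x y. Nmat G$x$y \<noteq> 0, \<lambda>x y. False)"
proof -
  have p_nonzero: "p x \<noteq> 0" for x
    using T6_times_cnj[OF T6, of x] by auto
  have rotate: "p y * Nmat G$x$y = p x" if "Nmat G$x$y \<noteq> 0" for x y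
    using phase[OF that] T6_times_cnj[OF T6, of y] by (simp add: mult_ac)
  have edge: "p y = p x" if "fst G x y" for x y
    using rotate[of x y] that G by (simp add: Nmat_edge)
  have arc: "p y = cnj omega * p x" if "snd G x y" for x y
  proof -
    have "p y * omega = p x"
      using rotate[of x y] that by (simp add: Nmat_arc omega_nonzero)
    then have "p y * (omega * cnj omega) = p x * cnj omega"
      by (simp add: mult.assoc[symmetric])
    then show ?thesis
      by (simp add: omega_times_cnj_omega mult.commute)
  qed
  have "admissible p G"
    using T6 edge arc by (simp add: admissible_def)
  moreover have "three_way_switch p G = (\<lambda>x y. Nmat G$x$y \<noteq> 0, \<lambda>x y. False)"
  proof -
    have "p y \<noteq> omega * p x" "p x \<noteq> omega * p y" if "fst G x y" for x y
      using edge[OF that] p_nonzero[of x] omega_neq_1 by simp_all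
    moreover have "p y \<noteq> p x" if "snd G x y" for x y
      using arc[OF that] p_nonzero[of x] cnj_omega_neq_1 by simp
    moreover have "p x \<noteq> - omega * p y" if "snd G y x" for x y
      using arc[OF that] p_nonzero[of y] cnj_omega_neq_minus_omega mult_right_cancel by metis
    ultimately show ?thesis
      unfolding three_way_switch_def Nmat_nonzero_iff prod_eq_iff fst_conv snd_conv
      using arc by (intro conjI ext) blast+
  qed
  ultimately show ?thesis
    unfolding switch_step_def by (metis (no_types))
qed

theorem theorem5p9:
  fixes G :: "('v::finite) mgraph"
  assumes "mixed_graph G" and "rank (Nmat G) = 2"
  shows "\<exists>X Y (a::nat) (b::nat) (t::nat). X \<inter> Y = {} \<and> card X = a \<and> card Y = b \<and>
           card (UNIV - X - Y) = t \<and> a \<ge> 1 \<and> b \<ge> 1 \<and>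
           switching_equivalent G (Kbip_iso X Y)"
proof -
  interpret T6_hermitian "Nmat G"
    using assms(1) by (rule T6_hermitian_Nmat)
  obtain A B p where "A \<inter> B = {}" "A \<noteq> {}" "B \<noteq> {}" "\<And>x. p x \<in> T6"
    and support: "\<And>x y. Nmat G$x$y \<noteq> 0 \<longleftrightarrow> (x \<in> A \<and> y \<in> B) \<or> (x \<in> B \<and> y \<in> A)"
    and "\<And>x y. Nmat G$x$y \<noteq> 0 \<Longrightarrow> Nmat G$x$y = p x * cnj (p y)"
    using rank_2_bipartite_phases[OF assms(2)] by blast
  then have "switch_step G (\<lambda>x y. Nmat G$x$y \<noteq> 0, \<lambda>x y. False)"
    using switch_step_to_support[OF assms(1)] by blast
  moreover have "(\<lambda>x y. Nmat G$x$y \<noteq> 0, \<lambda>x y. False) = Kbip_iso A B"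
    using support by (auto simp: Kbip_iso_def)
  ultimately have "switching_equivalent G (Kbip_iso A B)"
    unfolding switching_equivalent_def by auto
  moreover have "card A \<ge> 1" "card B \<ge> 1"
    using \<open>A \<noteq> {}\<close> \<open>B \<noteq> {}\<close> by (simp_all add: Suc_le_eq card_gt_0_iff)
  ultimately show ?thesis
    using \<open>A \<inter> B = {}\<close> by blast
qed

end
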